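(* Let $N$ be a Poisson process on $[0,\infty)$ with intensity $\lambda>0$, with points $0<X_1<X_2<\cdots$, and let $\epsilon>0$. For a positive integer $m$ let $M^m_{\beta_0}(x)=\mathbb{E}[\beta_0(x)^m]$. For $s>0$ set $\alpha=\frac{e^{\epsilon\lambda}}{\lambda}\,s\,e^{\epsilon s}$. Then $$\int_0^\infty e^{-sx}M^m_{\beta_0}(x)\,dx=\frac{\alpha}{s(\alpha+1)}\,\mathrm{Li}_{-m}\!\left(\frac{1}{\alpha+1}\right),$$ the series defining the right-hand side being convergent since $\alpha>0$.
   Context: A cluster is a maximal set of consecutive points $X_j,\dots,X_k$ with $X_{l+1}-X_l\le\epsilon$ for $j\le l<k$; its end is $X_k+\epsilon$. $\beta_0(x)$ is the number of clusters whose end is $\le x$. The polylogarithm is $\mathrm{Li}_t(z)=\sum_{k=1}^\infty z^k/k^t$ for $|z|<1$. *)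

theory Defs
  imports "HOL-Probability.Probability"
begin

text \<open>Points of the Poisson process on [0,inf) with intensity lam, realised through
i.i.d. Exp(lam) inter-arrival times T 0, T 1, ...: the k-th point (k >= 1) is
X k = T 0 + ... + T (k-1), so 0 < X 1 < X 2 < ... almost surely.\<close>
definition poisson_points :: "(nat \<Rightarrow> 'a \<Rightarrow> real) \<Rightarrow> 'a \<Rightarrow> nat \<Rightarrow> real" where
  "poisson_points T \<omega> k = (\<Sum>i<k. T i \<omega>)"

definition is_cluster :: "(nat \<Rightarrow> real) \<Rightarrow> real \<Rightarrow> nat \<Rightarrow> nat \<Rightarrow> bool" where
  "is_cluster X eps j k \<longleftrightarrow> 1 \<le> j \<and> j \<le> k \<and>
     (\<forall>l. j \<le> l \<and> l < k \<longrightarrow> X (Suc l) - X l \<le> eps) \<and>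
     (j = 1 \<or> X j - X (j - 1) > eps) \<and>
     X (Suc k) - X k > eps"

text \<open>The end of the cluster X j..X k is X k + eps; beta0 x counts clusters with end <= x.\<close>
definition beta0 :: "(nat \<Rightarrow> real) \<Rightarrow> real \<Rightarrow> real \<Rightarrow> nat" where
  "beta0 X eps x = card {(j, k). is_cluster X eps j k \<and> X k + eps \<le> x}"

definition polylog :: "real \<Rightarrow> real \<Rightarrow> real" where
  "polylog t z = (\<Sum>k. z ^ Suc k / real (Suc k) powr t)"

end

theory Submission
  imports Defs
begin

text \<open>The points are partial sums of i.i.d. Exp(lam) gaps T i, and a cluster ends exactly at each
  long gap T k > eps; so beta0 x counts the long gaps k with X k + eps \<le> x. Telescoping the m-th
  power over these gaps in increasing order writes beta0(x)^m as a sum over l of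
  [T l > eps, X l + eps \<le> x] ((N + 1)^m - N^m), where N is the number of earlier long gaps.
  The Laplace transform in x turns the indicator into exp(-s (X l + eps)) / s. Expanding N over
  the set of earlier long gaps and using independence factorises the expectation into Laplace
  transforms of a single gap on {T \<le> eps} and on {T > eps}. Summing over l is a negative
  binomial series, which leaves the power series of the coefficients (j + 1)^m - j^m; that series
  is (1 - r) / r Li_{-m}(r) with r = 1 / (\<alpha> + 1).\<close>

section \<open>Clusters and long gaps\<close>

lemma is_cluster_start_unique:
  assumes "is_cluster X eps j k" and "is_cluster X eps j' k"
  shows "j = j'"
proof -
  have False if "is_cluster X eps a k" "is_cluster X eps b k" "a < b" for a b
  proof -
    from that have "eps < X b - X (b - 1)" by (auto simp: is_cluster_def)
    moreover have "a \<le> b - 1" "b - 1 < k" "Suc (b - 1) = b"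
      using that by (auto simp: is_cluster_def)
    moreover have "\<forall>l. a \<le> l \<and> l < k \<longrightarrow> X (Suc l) - X l \<le> eps"
      using that(1) by (simp add: is_cluster_def)
    ultimately show False by (metis not_le)
  qed
  then show ?thesis using assms by (cases j j' rule: linorder_cases) auto
qed

text \<open>A cluster ends at every long gap: it starts right after the last earlier long gap.\<close>

lemma is_cluster_exists:
  assumes "1 \<le> k" and "eps < X (Suc k) - X k"
  shows "\<exists>j. is_cluster X eps j k"
proof -
  define P where "P = {l. 1 \<le> l \<and> l < k \<and> eps < X (Suc l) - X l}"
  have "finite P" unfolding P_def by auto
  show ?thesis
  proof (cases "P = {}")
    case True
    then have "is_cluster X eps 1 k" using assms unfolding is_cluster_def P_def by (auto simp: not_less)
    then show ?thesis ..
  next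
    case False
    have "Max P \<in> P" using False \<open>finite P\<close> by simp
    moreover have "X (Suc l) - X l \<le> eps" if "Suc (Max P) \<le> l" "l < k" for l
    proof -
      have "l \<notin> P" using that Max_ge[OF \<open>finite P\<close>, of l] by auto
      with that show ?thesis unfolding P_def by auto
    qed
    ultimately have "is_cluster X eps (Suc (Max P)) k"
      using assms unfolding is_cluster_def P_def by auto
    then show ?thesis ..
  qed
qed

lemma beta0_eq_card_long_gaps:
  "beta0 X eps x = card {k. 1 \<le> k \<and> eps < X (Suc k) - X k \<and> X k + eps \<le> x}"
proof -
  let ?S = "{(j, k). is_cluster X eps j k \<and> X k + eps \<le> x}"
  have "inj_on snd ?S" using is_cluster_start_unique by (auto simp: inj_on_def)
  then have "card ?S = card (snd ` ?S)" by (simp add: card_image)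
  also have "snd ` ?S = {k. 1 \<le> k \<and> eps < X (Suc k) - X k \<and> X k + eps \<le> x}"
  proof
    show "snd ` ?S \<subseteq> {k. 1 \<le> k \<and> eps < X (Suc k) - X k \<and> X k + eps \<le> x}"
      by (auto simp: is_cluster_def)
    show "{k. 1 \<le> k \<and> eps < X (Suc k) - X k \<and> X k + eps \<le> x} \<subseteq> snd ` ?S"
    proof
      fix k assume k: "k \<in> {k. 1 \<le> k \<and> eps < X (Suc k) - X k \<and> X k + eps \<le> x}"
      then obtain j where "is_cluster X eps j k" using is_cluster_exists by blast
      with k show "k \<in> snd ` ?S" by (intro image_eqI[of _ _ "(j, k)"]) auto
    qed
  qed
  finally show ?thesis unfolding beta0_def .
qed

lemma beta0_poisson_points:
  "beta0 (poisson_points T \<omega>) eps x =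
     card {k. 1 \<le> k \<and> eps < T k \<omega> \<and> poisson_points T \<omega> k + eps \<le> x}"
  by (simp add: beta0_eq_card_long_gaps poisson_points_def)

lemma finite_long_gaps:
  fixes t :: "nat \<Rightarrow> real"
  assumes t: "\<And>i. 0 \<le> t i" and eps: "0 < eps"
  shows "finite {k. eps < t k \<and> (\<Sum>i<k. t i) \<le> x}"
proof -
  let ?K = "{k. eps < t k \<and> (\<Sum>i<k. t i) \<le> x}"
  have "card G \<le> nat \<lceil>x / eps\<rceil> + 1" if G: "G \<subseteq> ?K" "finite G" for G
  proof (cases "G = {}")
    case False
    have "Max G \<in> G" "G - {Max G} \<subseteq> {..<Max G}" using G(2) False by (auto simp: less_le)
    have "eps < t i" if "i \<in> G" for i using that G(1) by blast
    then have "real (card (G - {Max G})) * eps \<le> (\<Sum>i\<in>G - {Max G}. t i)"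
      by (intro sum_bounded_below) (simp add: less_imp_le)
    also have "\<dots> \<le> (\<Sum>i<Max G. t i)" using \<open>G - {Max G} \<subseteq> _\<close> t by (intro sum_mono2) auto
    also have "\<dots> \<le> x" using \<open>Max G \<in> G\<close> G(1) by blast
    finally have "real (card G - 1) * eps \<le> x"
      using \<open>Max G \<in> G\<close> G(2) by (simp add: card_Diff_singleton)
    then have "real (card G - 1) \<le> x / eps" using eps by (simp add: field_simps)
    then show ?thesis by linarith
  qed simp
  then show ?thesis using finite_if_finite_subsets_card_bdd by blast
qed

section \<open>Finite sums\<close>

definition pow_incr :: "nat \<Rightarrow> nat \<Rightarrow> real" where
  "pow_incr m n = real (Suc n) ^ m - real n ^ m"

lemma pow_incr_nonneg: "0 \<le> pow_incr m n"
  unfolding pow_incr_def by (simp add: power_mono)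

lemma sum_pow_incr_card_less:
  fixes L :: "nat set"
  assumes "finite L" and "1 \<le> m"
  shows "(\<Sum>k\<in>L. pow_incr m (card {i\<in>L. i < k})) = real (card L) ^ m"
  using assms(1)
proof (induction L rule: finite_linorder_max_induct)
  case empty
  then show ?case using assms(2) by simp
next
  case (insert b A)
  have "{i \<in> insert b A. i < b} = A" "\<And>k. k \<in> A \<Longrightarrow> {i \<in> insert b A. i < k} = {i \<in> A. i < k}"
    using insert.hyps by auto
  moreover have "b \<notin> A" using insert.hyps by auto
  ultimately have "(\<Sum>k\<in>insert b A. pow_incr m (card {i\<in>insert b A. i < k})) =
      pow_incr m (card A) + (\<Sum>k\<in>A. pow_incr m (card {i\<in>A. i < k}))"
    using insert.hyps by simp
  also have "\<dots> = real (card (insert b A)) ^ m"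
    using insert \<open>b \<notin> A\<close> by (simp add: pow_incr_def)
  finally show ?case .
qed

lemma sum_Pow_select:
  fixes a :: "'i \<Rightarrow> 'b::comm_semiring_1" and F :: "nat \<Rightarrow> 'b"
  assumes "finite I"
  shows "F (card {i\<in>I. P i}) * (\<Prod>i\<in>I. a i) =
    (\<Sum>B\<in>Pow I. F (card B) * (\<Prod>i\<in>I. if (i \<in> B) = P i then a i else 0))"
proof -
  let ?B = "{i\<in>I. P i}"
  have "(\<Prod>i\<in>I. if (i \<in> B) = P i then a i else 0) = 0" if "B \<in> Pow I" "B \<noteq> ?B" for B
  proof (rule prod_zero[OF assms])
    from that obtain i where "i \<in> I" "(i \<in> B) \<noteq> P i" by blast
    then show "\<exists>i\<in>I. (if (i \<in> B) = P i then a i else 0) = 0" by auto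
  qed
  then have "(\<Sum>B\<in>Pow I. F (card B) * (\<Prod>i\<in>I. if (i \<in> B) = P i then a i else 0)) =
      (\<Sum>B\<in>{?B}. F (card B) * (\<Prod>i\<in>I. if (i \<in> B) = P i then a i else 0))"
    using assms by (intro sum.mono_neutral_right) auto
  also have "\<dots> = F (card ?B) * (\<Prod>i\<in>I. a i)" by (simp cong: prod.cong)
  finally show ?thesis ..
qed

lemma sum_Pow_card:
  fixes F :: "nat \<Rightarrow> 'b::comm_semiring_1"
  assumes "finite I" and "card I < n"
  shows "(\<Sum>B\<in>Pow I. F (card B)) = (\<Sum>j<n. of_nat (card I choose j) * F j)"
proof -
  have "(\<Sum>B\<in>Pow I. F (card B)) = (\<Sum>j<n. \<Sum>B\<in>{B \<in> Pow I. card B = j}. F (card B))"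
  proof (rule sum.group[symmetric])
    show "card ` Pow I \<subseteq> {..<n}"
    proof
      fix k assume "k \<in> card ` Pow I"
      then obtain B where "B \<subseteq> I" "k = card B" by auto
      then have "k \<le> card I" using card_mono[OF assms(1)] by simp
      then show "k \<in> {..<n}" using assms(2) by simp
    qed
  qed (use assms(1) in auto)
  also have "\<dots> = (\<Sum>j<n. of_nat (card I choose j) * F j)"
  proof (intro sum.cong refl)
    fix j
    have "(\<Sum>B\<in>{B \<in> Pow I. card B = j}. F (card B)) = (\<Sum>B\<in>{B. B \<subseteq> I \<and> card B = j}. F j)"
      by (intro sum.cong) auto
    then show "(\<Sum>B\<in>{B \<in> Pow I. card B = j}. F (card B)) = of_nat (card I choose j) * F j"
      using n_subsets[OF assms(1), of j] by (simp add: mult_of_nat_commute)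
  qed
  finally show ?thesis .
qed

section \<open>Series\<close>

lemma negative_binomial_sums:
  fixes a :: real
  assumes "0 \<le> a" and "a < 1"
  shows "(\<lambda>l. if j < l then real ((l - 1) choose j) * a ^ (l - 1 - j) else 0)
    sums (1 / (1 - a) ^ Suc j)"
proof -
  let ?f = "\<lambda>l. if j < l then real ((l - 1) choose j) * a ^ (l - 1 - j) else 0"
  have "(\<lambda>n. (- (real j + 1) gchoose n) * (- a) ^ n) sums (1 + - a) powr (- (real j + 1))"
    using assms by (intro gen_binomial_real) simp
  moreover have "(- (real j + 1) gchoose n) * (- a) ^ n = real ((n + j) choose j) * a ^ n" for n
  proof -
    have "(- (real j + 1) gchoose n) = (- 1) ^ n * ((real j + 1 + real n - 1) gchoose n)"
      by (rule gbinomial_minus)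
    also have "real j + 1 + real n - 1 = real (n + j)" by simp
    also have "real (n + j) gchoose n = real ((n + j) choose n)"
      by (simp add: binomial_gbinomial)
    also have "(n + j) choose n = (n + j) choose j"
      using binomial_symmetric[of n "n + j"] by simp
    finally have "(- (real j + 1) gchoose n) = (- 1) ^ n * real ((n + j) choose j)" .
    moreover have "(- 1 :: real) ^ n * (- a) ^ n = a ^ n"
      by (simp add: power_mult_distrib[symmetric])
    ultimately show ?thesis by (metis mult.assoc mult.commute)
  qed
  moreover have "(1 + - a) powr (- (real j + 1)) = 1 / (1 - a) ^ Suc j"
  proof -
    have "(1 + - a) powr (- (real j + 1)) = inverse ((1 - a) powr real (Suc j))"
      by (subst powr_minus[symmetric]) (simp add: algebra_simps)
    also have "(1 - a) powr real (Suc j) = (1 - a) ^ Suc j"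
      using assms by (intro powr_realpow) simp
    finally show ?thesis by (simp add: divide_inverse)
  qed
  moreover have "(\<lambda>n. ?f (n + Suc j)) = (\<lambda>n. real ((n + j) choose j) * a ^ n)"
    by (auto simp: fun_eq_iff)
  ultimately have "(\<lambda>n. ?f (n + Suc j)) sums (1 / (1 - a) ^ Suc j)" by (simp only:)
  then have "?f sums (1 / (1 - a) ^ Suc j + (\<Sum>l<Suc j. ?f l))"
    by (rule sums_iff_shift[THEN iffD1])
  then show ?thesis by simp
qed

lemma suminf_swap_ennreal:
  fixes f :: "nat \<Rightarrow> nat \<Rightarrow> ennreal"
  shows "(\<Sum>i. \<Sum>j. f i j) = (\<Sum>j. \<Sum>i. f i j)"
proof -
  interpret PS: pair_sigma_finite "count_space (UNIV :: nat set)" "count_space (UNIV :: nat set)"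
    by (intro pair_sigma_finite.intro sigma_finite_measure_count_space)
  have "(\<Sum>i. \<Sum>j. f i j) = (\<integral>\<^sup>+i. \<integral>\<^sup>+j. f i j \<partial>count_space UNIV \<partial>count_space UNIV)"
    by (simp add: nn_integral_count_space_nat)
  also have "\<dots> = (\<integral>\<^sup>+j. \<integral>\<^sup>+i. f i j \<partial>count_space UNIV \<partial>count_space UNIV)"
    by (rule PS.Fubini'[symmetric]) (simp add: pair_measure_countable)
  also have "\<dots> = (\<Sum>j. \<Sum>i. f i j)"
    by (simp add: nn_integral_count_space_nat)
  finally show ?thesis .
qed

lemma suminf_binomial_convolution_ennreal:
  fixes w :: "nat \<Rightarrow> real" and a :: real
  assumes "0 \<le> a" and "a < 1" and "\<And>j. 0 \<le> w j"
  shows "(\<Sum>l. ennreal (\<Sum>j<l. real ((l - 1) choose j) * w j * a ^ (l - 1 - j))) =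
    (\<Sum>j. ennreal (w j / (1 - a) ^ Suc j))"
proof -
  define F where "F j l = w j * (if j < l then real ((l - 1) choose j) * a ^ (l - 1 - j) else 0)" for j l
  have F_nonneg: "0 \<le> F j l" for j l
    unfolding F_def using assms by simp
  have "ennreal (\<Sum>j<l. real ((l - 1) choose j) * w j * a ^ (l - 1 - j)) = (\<Sum>j. ennreal (F j l))" for l
  proof -
    have "(\<Sum>j. ennreal (F j l)) = (\<Sum>j<l. ennreal (F j l))"
      by (rule suminf_finite) (auto simp: F_def)
    also have "\<dots> = ennreal (\<Sum>j<l. F j l)"
      using F_nonneg by (simp add: sum_ennreal)
    also have "(\<Sum>j<l. F j l) = (\<Sum>j<l. real ((l - 1) choose j) * w j * a ^ (l - 1 - j))"
      unfolding F_def by (intro sum.cong) auto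
    finally show ?thesis ..
  qed
  then have "(\<Sum>l. ennreal (\<Sum>j<l. real ((l - 1) choose j) * w j * a ^ (l - 1 - j))) =
      (\<Sum>l. \<Sum>j. ennreal (F j l))"
    by simp
  also have "\<dots> = (\<Sum>j. \<Sum>l. ennreal (F j l))"
    by (rule suminf_swap_ennreal)
  also have "\<dots> = (\<Sum>j. ennreal (w j / (1 - a) ^ Suc j))"
  proof (intro arg_cong[where f = suminf] ext suminf_ennreal_eq F_nonneg)
    show "F j sums (w j / (1 - a) ^ Suc j)" for j
      using sums_mult[OF negative_binomial_sums[OF assms(1,2), of j], where c = "w j"]
      by (simp add: F_def[abs_def])
  qed
  finally show ?thesis .
qed

lemma summable_pow_mult_geometric:
  fixes r :: real
  assumes "0 \<le> r" and "r < 1"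
  shows "summable (\<lambda>n. real n ^ m * r ^ n)"
proof -
  have "(\<lambda>n. (real (Suc n) / real (Suc (Suc n))) ^ m) \<longlonglongrightarrow> 1 ^ m"
    by (intro tendsto_power LIMSEQ_Suc[OF LIMSEQ_n_over_Suc_n])
  then have "conv_radius (\<lambda>n. real (Suc n) ^ m) = 1"
    by (intro conv_radius_ratio_limit_nonzero[of _ 1]) (simp_all add: power_divide)
  then have "summable (\<lambda>n. real (Suc n) ^ m * r ^ n)"
    using assms by (intro summable_in_conv_radius) auto
  then have "summable (\<lambda>n. real (Suc n) ^ m * r ^ Suc n)"
    using summable_mult[of _ r] by (simp add: mult_ac)
  then show ?thesis by (subst summable_Suc_iff[symmetric])
qed

lemma polylog_neg_sums:
  assumes "0 < r" and "r < 1" and "1 \<le> m"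
  shows "(\<lambda>j. pow_incr m j * r ^ j) sums ((1 - r) / r * polylog (- real m) r)"
proof -
  define P where "P = polylog (- real m) r"
  have "polylog (- real m) r = (\<Sum>k. real (Suc k) ^ m * r ^ Suc k)"
    unfolding polylog_def by (simp add: powr_minus powr_realpow divide_inverse mult.commute)
  moreover have "summable (\<lambda>k. real (Suc k) ^ m * r ^ Suc k)"
    using summable_pow_mult_geometric[of r m] assms summable_Suc_iff[of "\<lambda>n. real n ^ m * r ^ n"]
    by simp
  ultimately have Suc_sums: "(\<lambda>k. real (Suc k) ^ m * r ^ Suc k) sums P"
    unfolding P_def by (simp add: summable_sums)
  then have "(\<lambda>j. real (Suc j) ^ m * r ^ j) sums (P / r)"
    using sums_divide[OF Suc_sums, of r] assms(1) by simp
  moreover have "(\<lambda>j. real j ^ m * r ^ j) sums P"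
    using sums_iff_shift[of "\<lambda>j. real j ^ m * r ^ j" 1] Suc_sums assms(3) by (simp add: power_0_left)
  ultimately have "(\<lambda>j. pow_incr m j * r ^ j) sums (P / r - P)"
    unfolding pow_incr_def left_diff_distrib by (rule sums_diff)
  moreover have "P / r - P = (1 - r) / r * P" using assms(1) by (simp add: field_simps)
  ultimately show ?thesis unfolding P_def by simp
qed

lemma polylog_neg_nonneg:
  assumes "0 < r" and "r < 1" and "1 \<le> m"
  shows "0 \<le> polylog (- real m) r"
proof -
  have "0 \<le> (1 - r) / r * polylog (- real m) r"
    using sums_le[OF _ sums_zero polylog_neg_sums[OF assms]] assms by (simp add: pow_incr_nonneg)
  moreover have "0 < (1 - r) / r" using assms by simp
  ultimately show ?thesis using mult_le_cancel_left_pos[of "(1 - r) / r" 0] by simp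
qed

section \<open>Integrals\<close>

lemma borel_measurable_real_card_Collect_nat:
  fixes P :: "nat \<Rightarrow> 'a \<Rightarrow> bool"
  assumes [measurable]: "\<And>k. Measurable.pred N (P k)"
  shows "(\<lambda>\<omega>. real (card {k. P k \<omega>})) \<in> borel_measurable N"
proof -
  have "real (card {k. P k \<omega>}) = enn2real (\<Sum>k. indicator {k. P k \<omega>} k :: ennreal)" for \<omega>
    by (simp add: nn_integral_count_space_nat[symmetric] emeasure_count_space)
  then show ?thesis by simp
qed

lemma has_integral_enn2real:
  fixes H :: "real \<Rightarrow> ennreal"
  assumes [measurable]: "H \<in> borel_measurable borel" "S \<in> sets borel"
    and integral: "(\<integral>\<^sup>+x. H x * indicator S x \<partial>lborel) = ennreal V" and "0 \<le> V"
  shows "((\<lambda>x. enn2real (H x)) has_integral V) S"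
proof -
  have "AE x in lborel. H x * indicator S x \<noteq> \<infinity>"
    using integral by (intro nn_integral_PInf_AE) simp_all
  then have "(\<integral>\<^sup>+x. ennreal (enn2real (H x * indicator S x)) \<partial>lborel) = ennreal V"
    using integral by (subst nn_integral_cong_AE[where v = "\<lambda>x. H x * indicator S x"])
      (auto elim!: eventually_mono simp: less_top)
  then have "((\<lambda>x. enn2real (H x * indicator S x)) has_integral V) UNIV"
    using assms(4) by (intro nn_integral_has_integral) simp_all
  moreover have "(\<lambda>x. enn2real (H x * indicator S x)) = (\<lambda>x. if x \<in> S then enn2real (H x) else 0)"
    by (auto simp: indicator_def)
  ultimately show ?thesis by (simp add: has_integral_restrict_UNIV)
qed

lemma nn_integral_exp_atLeast:
  fixes C \<mu> u :: real
  assumes "0 < \<mu>" and "0 \<le> C"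
  shows "(\<integral>\<^sup>+t. ennreal (C * exp (- \<mu> * t)) * indicator {u..} t \<partial>lborel) =
    ennreal (C / \<mu> * exp (- \<mu> * u))"
proof -
  have "filterlim (\<lambda>t. \<mu> * t) at_top at_top"
    using assms(1) by (intro filterlim_tendsto_pos_mult_at_top[OF tendsto_const _ filterlim_ident])
  then have "((\<lambda>t. exp (- (\<mu> * t))) \<longlongrightarrow> 0) at_top"
    by (intro filterlim_compose[OF exp_at_bot]) (simp add: filterlim_uminus_at_bot)
  then have "((\<lambda>t. - C / \<mu> * exp (- \<mu> * t)) \<longlongrightarrow> - C / \<mu> * 0) at_top"
    by (intro tendsto_mult tendsto_const) simp
  then have "((\<lambda>t. - C / \<mu> * exp (- \<mu> * t)) \<longlongrightarrow> 0) at_top" by simp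
  then have "(\<integral>\<^sup>+t. ennreal (C * exp (- \<mu> * t)) * indicator {u..} t \<partial>lborel) =
      ennreal (0 - (- C / \<mu> * exp (- \<mu> * u)))"
    using assms by (intro nn_integral_FTC_atLeast) (auto intro!: derivative_eq_intros)
  then show ?thesis by simp
qed

lemma nn_integral_exp_greaterThan:
  fixes C \<mu> u :: real
  assumes "0 < \<mu>" and "0 \<le> C"
  shows "(\<integral>\<^sup>+t. ennreal (C * exp (- \<mu> * t)) * indicator {u<..} t \<partial>lborel) =
    ennreal (C / \<mu> * exp (- \<mu> * u))"
proof -
  have "(\<integral>\<^sup>+t. ennreal (C * exp (- \<mu> * t)) * indicator {u<..} t \<partial>lborel) =
      (\<integral>\<^sup>+t. ennreal (C * exp (- \<mu> * t)) * indicator {u..} t \<partial>lborel)"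
    by (intro nn_integral_cong_AE eventually_mono[OF AE_lborel_singleton[of u]])
      (simp add: indicator_def)
  with nn_integral_exp_atLeast[OF assms] show ?thesis by simp
qed

lemma nn_integral_exp_atLeastAtMost:
  fixes C \<mu> u v :: real
  assumes "0 < \<mu>" and "0 \<le> C" and "u \<le> v"
  shows "(\<integral>\<^sup>+t. ennreal (C * exp (- \<mu> * t)) * indicator {u..v} t \<partial>lborel) =
    ennreal (C / \<mu> * (exp (- \<mu> * u) - exp (- \<mu> * v)))"
proof -
  have "(\<integral>\<^sup>+t\<in>{u..v}. ennreal (C * exp (- \<mu> * t)) \<partial>lborel) =
      ennreal (- C / \<mu> * exp (- \<mu> * v) - - C / \<mu> * exp (- \<mu> * u))"
    using assms by (intro nn_integral_FTC_Icc) (auto intro!: derivative_eq_intros)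
  moreover have "- C / \<mu> * exp (- \<mu> * v) - - C / \<mu> * exp (- \<mu> * u) =
      C / \<mu> * (exp (- \<mu> * u) - exp (- \<mu> * v))"
    by (simp add: algebra_simps)
  ultimately show ?thesis by simp
qed

lemma (in prob_space) nn_integral_exponential:
  assumes X: "distributed M lborel X (exponential_density l)" and "0 < l"
    and [measurable]: "\<phi> \<in> borel_measurable borel" and "\<And>t. 0 \<le> \<phi> t"
  shows "(\<integral>\<^sup>+\<omega>. ennreal (\<phi> (X \<omega>)) \<partial>M) =
    (\<integral>\<^sup>+t. ennreal (l * exp (- l * t) * \<phi> t) * indicator {0..} t \<partial>lborel)"
proof -
  have "(\<integral>\<^sup>+\<omega>. ennreal (\<phi> (X \<omega>)) \<partial>M) =
      (\<integral>\<^sup>+t. ennreal (exponential_density l t) * ennreal (\<phi> t) \<partial>lborel)"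
    by (rule distributed_nn_integral[OF X, symmetric]) measurable
  also have "\<dots> = (\<integral>\<^sup>+t. ennreal (l * exp (- l * t) * \<phi> t) * indicator {0..} t \<partial>lborel)"
    using assms by (intro nn_integral_cong)
      (auto simp: exponential_density_def ennreal_mult[symmetric] mult.commute)
  finally show ?thesis .
qed

lemma (in prob_space) exponential_laplace:
  assumes X: "distributed M lborel X (exponential_density l)" and "0 < l" and "0 \<le> s"
  shows "(\<integral>\<^sup>+\<omega>. ennreal (exp (- s * X \<omega>)) \<partial>M) = ennreal (l / (l + s))"
proof -
  have "(\<integral>\<^sup>+\<omega>. ennreal (exp (- s * X \<omega>)) \<partial>M) =
      (\<integral>\<^sup>+t. ennreal (l * exp (- (l + s) * t)) * indicator {0..} t \<partial>lborel)"
    using assms by (subst nn_integral_exponential[OF X]) (auto simp: mult_exp_exp algebra_simps)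
  also have "\<dots> = ennreal (l / (l + s))"
    using assms by (subst nn_integral_exp_atLeast) auto
  finally show ?thesis .
qed

lemma (in prob_space) exponential_laplace_greaterThan:
  assumes X: "distributed M lborel X (exponential_density l)" and "0 < l" and "0 \<le> s" and "0 \<le> u"
  shows "(\<integral>\<^sup>+\<omega>. ennreal (if u < X \<omega> then exp (- s * X \<omega>) else 0) \<partial>M) =
    ennreal (l / (l + s) * exp (- (l + s) * u))"
proof -
  have "(\<integral>\<^sup>+\<omega>. ennreal (if u < X \<omega> then exp (- s * X \<omega>) else 0) \<partial>M) =
      (\<integral>\<^sup>+t. ennreal (l * exp (- (l + s) * t)) * indicator {u<..} t \<partial>lborel)"
    using assms by (subst nn_integral_exponential[OF X])
      (auto intro!: nn_integral_cong simp: indicator_def mult_exp_exp algebra_simps)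
  also have "\<dots> = ennreal (l / (l + s) * exp (- (l + s) * u))"
    using assms by (subst nn_integral_exp_greaterThan) auto
  finally show ?thesis .
qed

lemma (in prob_space) exponential_laplace_atMost:
  assumes X: "distributed M lborel X (exponential_density l)" and "0 < l" and "0 \<le> s" and "0 \<le> u"
  shows "(\<integral>\<^sup>+\<omega>. ennreal (if u < X \<omega> then 0 else exp (- s * X \<omega>)) \<partial>M) =
    ennreal (l / (l + s) * (1 - exp (- (l + s) * u)))"
proof -
  have "(\<integral>\<^sup>+\<omega>. ennreal (if u < X \<omega> then 0 else exp (- s * X \<omega>)) \<partial>M) =
      (\<integral>\<^sup>+t. ennreal (l * exp (- (l + s) * t)) * indicator {0..u} t \<partial>lborel)"
    using assms by (subst nn_integral_exponential[OF X])
      (auto intro!: nn_integral_cong simp: indicator_def mult_exp_exp algebra_simps)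
  also have "\<dots> = ennreal (l / (l + s) * (1 - exp (- (l + s) * u)))"
    using assms by (subst nn_integral_exp_atLeastAtMost) auto
  finally show ?thesis .
qed

section \<open>The Laplace transform of the moments of beta0\<close>

locale beta0_laplace = prob_space M for M :: "'a measure" +
  fixes T :: "nat \<Rightarrow> 'a \<Rightarrow> real" and lam eps s :: real and m :: nat
  assumes lam_pos: "0 < lam" and eps_pos: "0 < eps" and s_pos: "0 < s" and m_pos: "1 \<le> m"
    and indep: "indep_vars (\<lambda>_. borel) T UNIV"
    and exponential: "\<And>i. distributed M lborel (T i) (exponential_density lam)"
begin

lemma borel_measurable_T[measurable]: "T i \<in> borel_measurable M"
  using indep unfolding indep_vars_def by auto

lemma AE_T_nonneg: "AE \<omega> in M. \<forall>i. 0 \<le> T i \<omega>"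
  unfolding AE_all_countable
proof
  fix i
  have "(AE \<omega> in M. 0 \<le> T i \<omega>) =
      (AE x in lborel. 0 < ennreal (exponential_density lam x) \<longrightarrow> 0 \<le> x)"
    by (rule distributed_AE2[OF exponential]) measurable
  also have "\<dots>" by (intro AE_I2) (auto simp: exponential_density_def)
  finally show "AE \<omega> in M. 0 \<le> T i \<omega>" .
qed

definition long_gaps_before :: "nat \<Rightarrow> 'a \<Rightarrow> nat" where
  "long_gaps_before l \<omega> = card {i \<in> {1..<l}. eps < T i \<omega>}"

lemma borel_measurable_long_gaps_before[measurable]:
  "(\<lambda>\<omega>. real (long_gaps_before l \<omega>)) \<in> borel_measurable M"
  unfolding long_gaps_before_def by (rule borel_measurable_real_card_Collect_nat) measurable

definition gap_term :: "nat \<Rightarrow> real \<Rightarrow> 'a \<Rightarrow> real" where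
  "gap_term l x \<omega> =
    (if 1 \<le> l \<and> eps < T l \<omega> \<and> poisson_points T \<omega> l + eps \<le> x
     then pow_incr m (long_gaps_before l \<omega>) else 0)"

lemma borel_measurable_gap_term[measurable]:
  "(\<lambda>(x, \<omega>). gap_term l x \<omega>) \<in> borel_measurable (lborel \<Otimes>\<^sub>M M)"
  "(\<lambda>(\<omega>, x). gap_term l x \<omega>) \<in> borel_measurable (M \<Otimes>\<^sub>M lborel)"
  unfolding gap_term_def pow_incr_def poisson_points_def of_nat_Suc by measurable

lemma gap_term_nonneg: "0 \<le> gap_term l x \<omega>"
  by (simp add: gap_term_def pow_incr_nonneg)

lemma borel_measurable_beta0_power[measurable]:
  "(\<lambda>\<omega>. real (beta0 (poisson_points T \<omega>) eps x) ^ m) \<in> borel_measurable M"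
  unfolding beta0_poisson_points poisson_points_def
  by (intro borel_measurable_power borel_measurable_real_card_Collect_nat) measurable

lemma beta0_power_eq_suminf_gap_term:
  assumes T_nonneg: "\<And>i. 0 \<le> T i \<omega>"
  shows "ennreal (real (beta0 (poisson_points T \<omega>) eps x) ^ m) = (\<Sum>l. ennreal (gap_term l x \<omega>))"
proof -
  let ?K = "{k. 1 \<le> k \<and> eps < T k \<omega> \<and> poisson_points T \<omega> k + eps \<le> x}"
  have "finite ?K"
    by (rule finite_subset[OF _ finite_long_gaps[of "\<lambda>i. T i \<omega>", OF T_nonneg eps_pos, where x = "x - eps"]])
      (auto simp: poisson_points_def)
  have mono: "poisson_points T \<omega> i \<le> poisson_points T \<omega> k" if "i \<le> k" for i k
    using that T_nonneg unfolding poisson_points_def by (intro sum_mono2) auto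
  have "{i \<in> ?K. i < k} = {i \<in> {1..<k}. eps < T i \<omega>}" if "k \<in> ?K" for k
  proof (intro set_eqI iffI)
    fix i assume i: "i \<in> {i \<in> {1..<k}. eps < T i \<omega>}"
    then have "poisson_points T \<omega> i \<le> poisson_points T \<omega> k" by (intro mono) simp
    with i that show "i \<in> {i \<in> ?K. i < k}" by auto
  qed (use that in auto)
  then have "(\<Sum>k\<in>?K. pow_incr m (card {i \<in> ?K. i < k})) = (\<Sum>k\<in>?K. gap_term k x \<omega>)"
    by (intro sum.cong) (auto simp: gap_term_def long_gaps_before_def)
  then have "real (card ?K) ^ m = (\<Sum>k\<in>?K. gap_term k x \<omega>)"
    using sum_pow_incr_card_less[OF \<open>finite ?K\<close> m_pos] by simp
  moreover have "(\<Sum>l. ennreal (gap_term l x \<omega>)) = (\<Sum>l\<in>?K. ennreal (gap_term l x \<omega>))"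
    by (rule suminf_finite[OF \<open>finite ?K\<close>]) (auto simp: gap_term_def)
  ultimately show ?thesis by (simp add: beta0_poisson_points gap_term_nonneg)
qed

lemma nn_integral_moment_eq_suminf:
  "(\<integral>\<^sup>+\<omega>. ennreal (real (beta0 (poisson_points T \<omega>) eps x) ^ m) \<partial>M) =
    (\<Sum>l. \<integral>\<^sup>+\<omega>. ennreal (gap_term l x \<omega>) \<partial>M)"
proof -
  have "(\<integral>\<^sup>+\<omega>. ennreal (real (beta0 (poisson_points T \<omega>) eps x) ^ m) \<partial>M) =
      (\<integral>\<^sup>+\<omega>. (\<Sum>l. ennreal (gap_term l x \<omega>)) \<partial>M)"
    using AE_T_nonneg by (intro nn_integral_cong_AE) (auto elim!: eventually_mono
        simp: beta0_power_eq_suminf_gap_term)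
  also have "\<dots> = (\<Sum>l. \<integral>\<^sup>+\<omega>. ennreal (gap_term l x \<omega>) \<partial>M)"
    by (intro nn_integral_suminf) measurable
  finally show ?thesis .
qed

definition gap_weight :: "nat \<Rightarrow> 'a \<Rightarrow> real" where
  "gap_weight l \<omega> =
    (if 1 \<le> l \<and> eps < T l \<omega>
     then pow_incr m (long_gaps_before l \<omega>) * exp (- s * poisson_points T \<omega> l) else 0)"

lemma borel_measurable_gap_weight[measurable]: "gap_weight l \<in> borel_measurable M"
  unfolding gap_weight_def pow_incr_def poisson_points_def of_nat_Suc by measurable

lemma nn_integral_laplace_gap_term:
  assumes T_nonneg: "\<And>i. 0 \<le> T i \<omega>"
  shows "(\<integral>\<^sup>+x. ennreal (exp (- s * x)) * indicator {0..} x * ennreal (gap_term l x \<omega>) \<partial>lborel) =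
    ennreal (exp (- s * eps) / s * gap_weight l \<omega>)"
proof (cases "1 \<le> l \<and> eps < T l \<omega>")
  case True
  let ?c = "poisson_points T \<omega> l + eps" and ?w = "pow_incr m (long_gaps_before l \<omega>)"
  have "0 \<le> poisson_points T \<omega> l" using T_nonneg by (simp add: poisson_points_def sum_nonneg)
  then have "(\<integral>\<^sup>+x. ennreal (exp (- s * x)) * indicator {0..} x * ennreal (gap_term l x \<omega>) \<partial>lborel) =
      (\<integral>\<^sup>+x. ennreal (?w * exp (- s * x)) * indicator {?c..} x \<partial>lborel)"
    using True eps_pos
    by (intro nn_integral_cong) (auto simp: gap_term_def indicator_def ennreal_mult pow_incr_nonneg mult.commute)
  also have "\<dots> = ennreal (?w / s * exp (- s * ?c))"
    using s_pos by (intro nn_integral_exp_atLeast) (simp_all add: pow_incr_nonneg)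
  also have "exp (- s * ?c) = exp (- s * eps) * exp (- s * poisson_points T \<omega> l)"
    by (simp add: exp_add[symmetric] algebra_simps)
  finally show ?thesis using True by (simp add: gap_weight_def field_simps)
next
  case False
  then have "gap_term l x \<omega> = 0" "gap_weight l \<omega> = 0" for x
    by (auto simp: gap_term_def gap_weight_def)
  then show ?thesis by simp
qed

lemma nn_integral_laplace_expected_gap_term:
  "(\<integral>\<^sup>+x. ennreal (exp (- s * x)) * indicator {0..} x * (\<integral>\<^sup>+\<omega>. ennreal (gap_term l x \<omega>) \<partial>M) \<partial>lborel) =
    (\<integral>\<^sup>+\<omega>. ennreal (exp (- s * eps) / s * gap_weight l \<omega>) \<partial>M)"
proof -
  interpret pair_sigma_finite M lborel ..
  have "(\<integral>\<^sup>+x. ennreal (exp (- s * x)) * indicator {0..} x * (\<integral>\<^sup>+\<omega>. ennreal (gap_term l x \<omega>) \<partial>M) \<partial>lborel) =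
      (\<integral>\<^sup>+x. \<integral>\<^sup>+\<omega>. ennreal (exp (- s * x)) * indicator {0..} x * ennreal (gap_term l x \<omega>) \<partial>M \<partial>lborel)"
    by (intro nn_integral_cong nn_integral_cmult[symmetric]) measurable
  also have "\<dots> = (\<integral>\<^sup>+\<omega>. \<integral>\<^sup>+x. ennreal (exp (- s * x)) * indicator {0..} x * ennreal (gap_term l x \<omega>) \<partial>lborel \<partial>M)"
    by (intro Fubini') measurable
  also have "\<dots> = (\<integral>\<^sup>+\<omega>. ennreal (exp (- s * eps) / s * gap_weight l \<omega>) \<partial>M)"
    by (intro nn_integral_cong_AE eventually_mono[OF AE_T_nonneg] nn_integral_laplace_gap_term) simp
  finally show ?thesis .
qed

text \<open>The Laplace transforms of a single gap restricted to short and to long gaps.\<close>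

definition laplace_short :: real where
  "laplace_short = lam / (lam + s) * (1 - exp (- (lam + s) * eps))"

definition laplace_long :: real where
  "laplace_long = lam / (lam + s) * exp (- (lam + s) * eps)"

lemma laplace_short_nonneg: "0 \<le> laplace_short" and laplace_long_nonneg: "0 \<le> laplace_long"
proof -
  have "- (lam + s) * eps \<le> 0" using lam_pos s_pos eps_pos by (intro mult_nonpos_nonneg) simp_all
  then have "0 \<le> 1 - exp (- (lam + s) * eps)" by simp
  then show "0 \<le> laplace_short" "0 \<le> laplace_long"
    using lam_pos s_pos unfolding laplace_short_def laplace_long_def by simp_all
qed

lemma laplace_short_less_1: "laplace_short < 1"
proof -
  have "lam / (lam + s) * (1 - exp (- (lam + s) * eps)) \<le> lam / (lam + s)"
    using lam_pos s_pos by (intro mult_left_le) simp_all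
  moreover have "lam / (lam + s) < 1" using lam_pos s_pos by simp
  ultimately show ?thesis unfolding laplace_short_def by linarith
qed

text \<open>Expanding the count of long gaps among T 1, ..., T (l - 1) over the set B of those
  gaps turns gap_weight l into a sum of products of functions of single gaps.\<close>

definition gap_factor :: "nat \<Rightarrow> nat set \<Rightarrow> nat \<Rightarrow> real \<Rightarrow> real" where
  "gap_factor l B i t =
    (if i = 0 then exp (- s * t)
     else if i = l then of_bool (eps < t)
     else if i \<in> B then (if eps < t then exp (- s * t) else 0)
     else (if eps < t then 0 else exp (- s * t)))"

lemma gap_factor_nonneg: "0 \<le> gap_factor l B i t"
  by (simp add: gap_factor_def)

lemma borel_measurable_gap_factor[measurable]: "gap_factor l B i \<in> borel_measurable borel"
  unfolding gap_factor_def by measurable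

lemma gap_weight_eq_sum_Pow:
  assumes "1 \<le> l"
  shows "gap_weight l \<omega> =
    (\<Sum>B\<in>Pow {1..<l}. pow_incr m (card B) * (\<Prod>i\<in>{0..l}. gap_factor l B i (T i \<omega>)))"
proof -
  let ?I = "{1..<l}"
  let ?sel = "\<lambda>B i. if (i \<in> B) = (eps < T i \<omega>) then exp (- s * T i \<omega>) else 0"
  have "{0..l} = insert 0 (insert l ?I)" "{..<l} = insert 0 ?I" using assms by auto
  moreover have "(\<Prod>i\<in>?I. gap_factor l B i (T i \<omega>)) = (\<Prod>i\<in>?I. ?sel B i)" for B
    by (intro prod.cong) (auto simp: gap_factor_def)
  ultimately have prod_gap_factor: "(\<Prod>i\<in>{0..l}. gap_factor l B i (T i \<omega>)) =
      exp (- s * T 0 \<omega>) * (of_bool (eps < T l \<omega>) * (\<Prod>i\<in>?I. ?sel B i))" for B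
    using assms by (simp add: gap_factor_def)
  have "exp (- s * poisson_points T \<omega> l) = exp (- s * T 0 \<omega>) * (\<Prod>i\<in>?I. exp (- s * T i \<omega>))"
  proof -
    have "- s * poisson_points T \<omega> l = - s * T 0 \<omega> + (\<Sum>i\<in>?I. - s * T i \<omega>)"
      using \<open>{..<l} = insert 0 ?I\<close> by (simp add: poisson_points_def algebra_simps sum_distrib_left)
    then show ?thesis by (simp only: exp_add exp_sum[OF finite_atLeastLessThan])
  qed
  then have "gap_weight l \<omega> = exp (- s * T 0 \<omega>) * of_bool (eps < T l \<omega>) *
      (pow_incr m (card {i \<in> ?I. eps < T i \<omega>}) * (\<Prod>i\<in>?I. exp (- s * T i \<omega>)))"
    using assms by (simp add: gap_weight_def long_gaps_before_def)
  also have "\<dots> = exp (- s * T 0 \<omega>) * of_bool (eps < T l \<omega>) *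
      (\<Sum>B\<in>Pow ?I. pow_incr m (card B) * (\<Prod>i\<in>?I. ?sel B i))"
    by (subst sum_Pow_select) simp_all
  also have "\<dots> = (\<Sum>B\<in>Pow ?I. pow_incr m (card B) * (\<Prod>i\<in>{0..l}. gap_factor l B i (T i \<omega>)))"
    by (simp add: prod_gap_factor sum_distrib_left mult_ac)
  finally show ?thesis .
qed

lemma nn_integral_gap_factor:
  assumes "i \<le> l"
  shows "(\<integral>\<^sup>+\<omega>. ennreal (gap_factor l B i (T i \<omega>)) \<partial>M) =
    ennreal (if i = 0 then lam / (lam + s) else if i = l then exp (- lam * eps)
      else if i \<in> B then laplace_long else laplace_short)"
proof -
  note laplace = exponential_laplace[OF exponential lam_pos]
    exponential_laplace_greaterThan[OF exponential lam_pos]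
    exponential_laplace_atMost[OF exponential lam_pos]
  consider "i = 0" | "i \<noteq> 0" "i = l" | "i \<noteq> 0" "i \<noteq> l" "i \<in> B" | "i \<noteq> 0" "i \<noteq> l" "i \<notin> B"
    by blast
  then show ?thesis
  proof cases
    case 1
    then show ?thesis using laplace(1)[of s i] s_pos by (simp add: gap_factor_def)
  next
    case 2
    then have "(\<lambda>\<omega>. ennreal (gap_factor l B i (T i \<omega>))) =
        (\<lambda>\<omega>. ennreal (if eps < T i \<omega> then exp (- 0 * T i \<omega>) else 0))"
      by (simp add: gap_factor_def fun_eq_iff)
    then show ?thesis using laplace(2)[of 0 eps i] eps_pos lam_pos 2 by simp
  next
    case 3
    then show ?thesis using laplace(2)[of s eps i] s_pos eps_pos by (simp add: gap_factor_def laplace_long_def)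
  next
    case 4
    then show ?thesis using laplace(3)[of s eps i] s_pos eps_pos by (simp add: gap_factor_def laplace_short_def)
  qed
qed

lemma nn_integral_prod_gap_factor:
  assumes "1 \<le> l" and "B \<subseteq> {1..<l}"
  shows "(\<integral>\<^sup>+\<omega>. (\<Prod>i\<in>{0..l}. ennreal (gap_factor l B i (T i \<omega>))) \<partial>M) =
    ennreal (lam / (lam + s) * exp (- lam * eps) *
      (laplace_long ^ card B * laplace_short ^ (l - 1 - card B)))"
proof -
  let ?I = "{1..<l}"
  define \<mu> where "\<mu> i = (if i = 0 then lam / (lam + s) else if i = l then exp (- lam * eps)
      else if i \<in> B then laplace_long else laplace_short)" for i
  have \<mu>_nonneg: "0 \<le> \<mu> i" for i
    using lam_pos s_pos laplace_short_nonneg laplace_long_nonneg by (simp add: \<mu>_def)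
  have "indep_vars (\<lambda>_. borel) (\<lambda>i \<omega>. ennreal (gap_factor l B i (T i \<omega>))) {0..l}"
    by (intro indep_vars_compose2[OF indep_vars_subset[OF indep]]) simp_all
  then have "(\<integral>\<^sup>+\<omega>. (\<Prod>i\<in>{0..l}. ennreal (gap_factor l B i (T i \<omega>))) \<partial>M) =
      (\<Prod>i\<in>{0..l}. \<integral>\<^sup>+\<omega>. ennreal (gap_factor l B i (T i \<omega>)) \<partial>M)"
    by (intro indep_vars_nn_integral) simp_all
  also have "\<dots> = (\<Prod>i\<in>{0..l}. ennreal (\<mu> i))"
    by (intro prod.cong refl) (simp add: nn_integral_gap_factor \<mu>_def)
  also have "\<dots> = ennreal (\<Prod>i\<in>{0..l}. \<mu> i)"
    by (simp add: prod_ennreal \<mu>_nonneg)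
  also have "(\<Prod>i\<in>{0..l}. \<mu> i) = \<mu> 0 * (\<mu> l * (\<Prod>i\<in>?I. \<mu> i))"
  proof -
    have "{0..l} = insert 0 (insert l ?I)" using assms(1) by auto
    then show ?thesis using assms(1) by simp
  qed
  also have "(\<Prod>i\<in>?I. \<mu> i) = (\<Prod>i\<in>?I. if i \<in> B then laplace_long else laplace_short)"
    by (intro prod.cong) (auto simp: \<mu>_def)
  also have "\<dots> = laplace_long ^ card B * laplace_short ^ (l - 1 - card B)"
  proof -
    have "?I \<inter> {i. i \<in> B} = B" "?I \<inter> - {i. i \<in> B} = ?I - B" using assms(2) by auto
    moreover have "card (?I - B) = l - 1 - card B"
      using assms(2) by (subst card_Diff_subset) (auto intro: finite_subset)
    ultimately show ?thesis by (simp add: prod.If_cases)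
  qed
  finally show ?thesis using assms(1) by (simp add: \<mu>_def mult.assoc)
qed

lemma nn_integral_gap_weight:
  "(\<integral>\<^sup>+\<omega>. ennreal (gap_weight l \<omega>) \<partial>M) =
    ennreal (lam / (lam + s) * exp (- lam * eps) *
      (\<Sum>j<l. real ((l - 1) choose j) * (pow_incr m j * laplace_long ^ j) * laplace_short ^ (l - 1 - j)))"
proof (cases "l = 0")
  case True
  then show ?thesis by (simp add: gap_weight_def)
next
  case False
  then have l: "1 \<le> l" by simp
  let ?I = "{1..<l}" and ?c = "lam / (lam + s) * exp (- lam * eps)"
  let ?F = "\<lambda>j. pow_incr m j * (laplace_long ^ j * laplace_short ^ (l - 1 - j))"
  have F_nonneg: "0 \<le> ?c * ?F j" for j
    using lam_pos s_pos laplace_short_nonneg laplace_long_nonneg by (simp add: pow_incr_nonneg)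
  have "(\<integral>\<^sup>+\<omega>. ennreal (gap_weight l \<omega>) \<partial>M) =
      (\<integral>\<^sup>+\<omega>. (\<Sum>B\<in>Pow ?I. ennreal (pow_incr m (card B)) *
        (\<Prod>i\<in>{0..l}. ennreal (gap_factor l B i (T i \<omega>)))) \<partial>M)"
  proof (intro nn_integral_cong)
    fix \<omega>
    have "ennreal (gap_weight l \<omega>) = (\<Sum>B\<in>Pow ?I.
        ennreal (pow_incr m (card B) * (\<Prod>i\<in>{0..l}. gap_factor l B i (T i \<omega>))))"
      by (simp add: gap_weight_eq_sum_Pow[OF l] gap_factor_nonneg pow_incr_nonneg prod_nonneg)
    also have "\<dots> = (\<Sum>B\<in>Pow ?I. ennreal (pow_incr m (card B)) *
        (\<Prod>i\<in>{0..l}. ennreal (gap_factor l B i (T i \<omega>))))"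
      by (simp add: ennreal_mult prod_ennreal gap_factor_nonneg pow_incr_nonneg prod_nonneg)
    finally show "ennreal (gap_weight l \<omega>) = \<dots>" .
  qed
  also have "\<dots> = (\<Sum>B\<in>Pow ?I. ennreal (pow_incr m (card B)) *
      (\<integral>\<^sup>+\<omega>. (\<Prod>i\<in>{0..l}. ennreal (gap_factor l B i (T i \<omega>))) \<partial>M))"
    by (simp add: nn_integral_sum nn_integral_cmult)
  also have "\<dots> = (\<Sum>B\<in>Pow ?I. ennreal (?c * ?F (card B)))"
    using l by (intro sum.cong refl)
      (auto simp: nn_integral_prod_gap_factor ennreal_mult'[symmetric] pow_incr_nonneg mult_ac)
  also have "\<dots> = ennreal (\<Sum>B\<in>Pow ?I. ?c * ?F (card B))"
    using F_nonneg by simp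
  also have "(\<Sum>B\<in>Pow ?I. ?c * ?F (card B)) = (\<Sum>j<l. real (card ?I choose j) * (?c * ?F j))"
    using l by (intro sum_Pow_card) auto
  finally show ?thesis by (simp add: sum_distrib_left mult_ac)
qed

text \<open>The parameter of the polylogarithm, 1 / (\<alpha> + 1) in the notation of the statement.\<close>

definition ratio :: real where
  "ratio = lam * exp (- (lam + s) * eps) / (s + lam * exp (- (lam + s) * eps))"

lemma ratio_pos: "0 < ratio" and ratio_less_1: "ratio < 1"
proof -
  have "0 < lam * exp (- (lam + s) * eps)" using lam_pos by simp
  then show "0 < ratio" "ratio < 1" using s_pos by (simp_all add: ratio_def)
qed

lemma laplace_ratio:
  "laplace_long / (1 - laplace_short) = ratio"
  "exp (- s * eps) / s * (lam / (lam + s) * exp (- lam * eps)) / (1 - laplace_short) = ratio / s"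
proof -
  define E where "E = exp (- (lam + s) * eps)"
  have "0 < E" by (simp add: E_def)
  then have "0 < s + lam * E" using lam_pos s_pos by (intro add_pos_pos mult_pos_pos)
  then have nonzero: "s + lam * E \<noteq> 0" "lam + s \<noteq> 0" "s \<noteq> 0" using lam_pos s_pos by auto
  have short: "1 - laplace_short = (s + lam * E) / (lam + s)"
    using lam_pos s_pos by (simp add: laplace_short_def E_def field_simps)
  have "exp (- s * eps) / s * (lam / (lam + s) * exp (- lam * eps)) =
      (exp (- s * eps) * exp (- lam * eps)) * lam / (s * (lam + s))"
    by simp
  also have "exp (- s * eps) * exp (- lam * eps) = E" by (simp add: E_def mult_exp_exp algebra_simps)
  finally have const: "exp (- s * eps) / s * (lam / (lam + s) * exp (- lam * eps)) =
      E * lam / (s * (lam + s))" .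
  show "exp (- s * eps) / s * (lam / (lam + s) * exp (- lam * eps)) / (1 - laplace_short) = ratio / s"
    using nonzero unfolding const short ratio_def E_def[symmetric] by (simp add: mult.commute)
  show "laplace_long / (1 - laplace_short) = ratio"
    using nonzero unfolding short ratio_def E_def[symmetric] laplace_long_def by simp
qed

lemma ratio_eq_alpha:
  assumes "\<alpha> = exp (eps * lam) / lam * s * exp (eps * s)"
  shows "1 / (\<alpha> + 1) = ratio" and "\<alpha> / (s * (\<alpha> + 1)) = (1 - ratio) / s"
proof -
  define E where "E = exp (- (lam + s) * eps)"
  have "0 < E" by (simp add: E_def)
  then have "0 < s + lam * E" using lam_pos s_pos by (intro add_pos_pos mult_pos_pos)
  then have nonzero: "lam * E \<noteq> 0" "s + lam * E \<noteq> 0" "s \<noteq> 0"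
    using lam_pos s_pos \<open>0 < E\<close> by simp_all
  have "exp (eps * lam) * exp (eps * s) * E = 1" by (simp add: E_def mult_exp_exp algebra_simps)
  then have "\<alpha> = s / (lam * E)" using assms nonzero by (simp add: field_simps)
  have ratio: "ratio = lam * E / (s + lam * E)" by (simp add: ratio_def E_def)
  from nonzero show "1 / (\<alpha> + 1) = ratio" and "\<alpha> / (s * (\<alpha> + 1)) = (1 - ratio) / s"
    unfolding ratio \<open>\<alpha> = s / (lam * E)\<close> by (simp_all add: field_simps)
qed

lemma discounted_weights_sums:
  "(\<lambda>j. exp (- s * eps) / s * (lam / (lam + s) * exp (- lam * eps)) *
      (pow_incr m j * laplace_long ^ j) / (1 - laplace_short) ^ Suc j)
    sums ((1 - ratio) / s * polylog (- real m) ratio)"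
proof -
  let ?K = "exp (- s * eps) / s * (lam / (lam + s) * exp (- lam * eps))"
  have "1 - laplace_short \<noteq> 0" using laplace_short_less_1 by simp
  then have "?K * (pow_incr m j * laplace_long ^ j) / (1 - laplace_short) ^ Suc j =
      ?K / (1 - laplace_short) * (pow_incr m j * (laplace_long / (1 - laplace_short)) ^ j)" for j
    by (simp add: power_divide field_simps)
  then have "(\<lambda>j. ?K * (pow_incr m j * laplace_long ^ j) / (1 - laplace_short) ^ Suc j) =
      (\<lambda>j. ratio / s * (pow_incr m j * ratio ^ j))"
    unfolding laplace_ratio by simp
  moreover have "(\<lambda>j. ratio / s * (pow_incr m j * ratio ^ j)) sums
      (ratio / s * ((1 - ratio) / ratio * polylog (- real m) ratio))"
    by (intro sums_mult polylog_neg_sums ratio_pos ratio_less_1 m_pos)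
  ultimately show ?thesis using ratio_pos by simp
qed

lemma suminf_expected_gap_weight:
  "(\<Sum>l. \<integral>\<^sup>+\<omega>. ennreal (exp (- s * eps) / s * gap_weight l \<omega>) \<partial>M) =
    ennreal ((1 - ratio) / s * polylog (- real m) ratio)"
proof -
  let ?K = "exp (- s * eps) / s * (lam / (lam + s) * exp (- lam * eps))"
  let ?w = "\<lambda>j. ?K * (pow_incr m j * laplace_long ^ j)"
  have "0 \<le> ?K" using lam_pos s_pos by simp
  moreover have "0 \<le> pow_incr m j * laplace_long ^ j" for j
    by (simp add: pow_incr_nonneg laplace_long_nonneg)
  ultimately have w_nonneg: "0 \<le> ?w j" for j by (rule mult_nonneg_nonneg)
  have "(\<integral>\<^sup>+\<omega>. ennreal (exp (- s * eps) / s * gap_weight l \<omega>) \<partial>M) =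
      ennreal (\<Sum>j<l. real ((l - 1) choose j) * ?w j * laplace_short ^ (l - 1 - j))" for l
  proof -
    have "(\<integral>\<^sup>+\<omega>. ennreal (exp (- s * eps) / s * gap_weight l \<omega>) \<partial>M) =
        (\<integral>\<^sup>+\<omega>. ennreal (exp (- s * eps) / s) * ennreal (gap_weight l \<omega>) \<partial>M)"
      using s_pos by (intro nn_integral_cong ennreal_mult') simp
    also have "\<dots> = ennreal (exp (- s * eps) / s) * (\<integral>\<^sup>+\<omega>. ennreal (gap_weight l \<omega>) \<partial>M)"
      by (rule nn_integral_cmult) measurable
    also have "\<dots> = ennreal (exp (- s * eps) / s * (lam / (lam + s) * exp (- lam * eps) *
        (\<Sum>j<l. real ((l - 1) choose j) * (pow_incr m j * laplace_long ^ j) * laplace_short ^ (l - 1 - j))))"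
      unfolding nn_integral_gap_weight using s_pos by (intro ennreal_mult'[symmetric]) simp
    finally show ?thesis by (simp add: sum_distrib_left mult_ac)
  qed
  then have "(\<Sum>l. \<integral>\<^sup>+\<omega>. ennreal (exp (- s * eps) / s * gap_weight l \<omega>) \<partial>M) =
      (\<Sum>l. ennreal (\<Sum>j<l. real ((l - 1) choose j) * ?w j * laplace_short ^ (l - 1 - j)))"
    by simp
  also have "\<dots> = (\<Sum>j. ennreal (?w j / (1 - laplace_short) ^ Suc j))"
    by (intro suminf_binomial_convolution_ennreal laplace_short_nonneg laplace_short_less_1 w_nonneg)
  also have "\<dots> = ennreal ((1 - ratio) / s * polylog (- real m) ratio)"
  proof (rule suminf_ennreal_eq[OF _ discounted_weights_sums])
    show "0 \<le> ?w j / (1 - laplace_short) ^ Suc j" for j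
      using w_nonneg[of j] laplace_short_less_1 by (intro divide_nonneg_nonneg zero_le_power) simp_all
  qed
  finally show ?thesis .
qed

lemma laplace_moment_has_integral:
  "((\<lambda>x. exp (- s * x) * expectation (\<lambda>\<omega>. real (beta0 (poisson_points T \<omega>) eps x) ^ m))
     has_integral ((1 - ratio) / s * polylog (- real m) ratio)) {0..}"
proof -
  define G where "G x = (\<integral>\<^sup>+\<omega>. ennreal (real (beta0 (poisson_points T \<omega>) eps x) ^ m) \<partial>M)" for x
  have G_eq: "G x = (\<Sum>l. \<integral>\<^sup>+\<omega>. ennreal (gap_term l x \<omega>) \<partial>M)" for x
    unfolding G_def by (rule nn_integral_moment_eq_suminf)
  have [measurable]: "G \<in> borel_measurable borel"
    unfolding G_eq[abs_def] by measurable
  have "(\<integral>\<^sup>+x. ennreal (exp (- s * x)) * G x * indicator {0..} x \<partial>lborel) =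
      (\<integral>\<^sup>+x. (\<Sum>l. ennreal (exp (- s * x)) * indicator {0..} x *
        (\<integral>\<^sup>+\<omega>. ennreal (gap_term l x \<omega>) \<partial>M)) \<partial>lborel)"
    by (simp add: G_eq mult_ac)
  also have "\<dots> = (\<Sum>l. \<integral>\<^sup>+x. ennreal (exp (- s * x)) * indicator {0..} x *
      (\<integral>\<^sup>+\<omega>. ennreal (gap_term l x \<omega>) \<partial>M) \<partial>lborel)"
    by (intro nn_integral_suminf) measurable
  also have "\<dots> = ennreal ((1 - ratio) / s * polylog (- real m) ratio)"
    by (simp only: nn_integral_laplace_expected_gap_term suminf_expected_gap_weight)
  finally have "((\<lambda>x. enn2real (ennreal (exp (- s * x)) * G x)) has_integral
      ((1 - ratio) / s * polylog (- real m) ratio)) {0..}"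
    using ratio_pos ratio_less_1 s_pos polylog_neg_nonneg[OF ratio_pos ratio_less_1 m_pos]
    by (intro has_integral_enn2real) simp_all
  moreover have "enn2real (ennreal (exp (- s * x)) * G x) =
      exp (- s * x) * expectation (\<lambda>\<omega>. real (beta0 (poisson_points T \<omega>) eps x) ^ m)" for x
    by (simp add: G_def enn2real_mult integral_eq_nn_integral)
  ultimately show ?thesis by simp
qed

end

theorem corollary3:
  fixes M :: "'a measure" and T :: "nat \<Rightarrow> 'a \<Rightarrow> real"
    and lam eps s :: real and m :: nat
  assumes "prob_space M"
    and "lam > 0" and "eps > 0" and "s > 0" and "m \<ge> 1"
    and "prob_space.indep_vars M (\<lambda>_. borel) T UNIV"
    and "\<And>i. distributed M lborel (T i) (exponential_density lam)"
  shows "let \<alpha> = exp (eps * lam) / lam * s * exp (eps * s);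
             Mom = (\<lambda>x. prob_space.expectation M
                       (\<lambda>\<omega>. real (beta0 (poisson_points T \<omega>) eps x) ^ m))
         in ((\<lambda>x. exp (- s * x) * Mom x) has_integral
               (\<alpha> / (s * (\<alpha> + 1)) * polylog (- real m) (1 / (\<alpha> + 1)))) {0..}"
proof -
  interpret beta0_laplace M T lam eps s m
    by (rule beta0_laplace.intro[OF assms(1)], unfold_locales) (use assms in auto)
  show ?thesis
    unfolding Let_def ratio_eq_alpha[OF refl] by (rule laplace_moment_has_integral)
qed

end
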